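(* Let $(A,B,\mathfrak H)$ be a P-module. If $\xi\in\mathfrak H$ is contained in an eventually periodic ray $p$ that is not periodic, then $\xi\in\mathfrak H_{\mathrm{res}}$.
   Context: A P-module is $(A,B,\mathfrak H)$ with $\mathfrak H$ a finite-dimensional complex Hilbert space and $A,B$ operators with $A^*A+B^*B=\mathrm{id}$. A sub-module is a subspace invariant under $A,B$; irreducible means no sub-modules besides $\{0\}$ and itself. $\mathfrak H$ decomposes orthogonally as $\mathfrak H=\mathfrak H_{\mathrm{comp}}\oplus\mathfrak H_{\mathrm{res}}$, where the complete sub-module $\mathfrak H_{\mathrm{comp}}$ is a direct sum of irreducible sub-modules and the residual subspace $\mathfrak H_{\mathrm{res}}$ contains no non-zero sub-module. A ray is an infinite binary sequence $p=x_1x_2\cdots$, $p_n=x_1\cdots x_n$; for a word $w=x_1\cdots x_n$, $w\xi:=X_{x_n}\cdots X_{x_1}\xi$ with $X_0=A,X_1=B$. A non-zero $\xi$ is contained in $p$ if $\|p_n\xi\|=\|\xi\|$ for all $n$. $p$ is eventually periodic if $p=v\cdot w^\infty$ for finite words $v,w$, and periodic if $p=w^\infty$. *)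

theory Defs
  imports "HOL-Analysis.Analysis"
begin

text \<open>The Hilbert space is modelled as complex^'n (any finite-dimensional
complex Hilbert space is isometric to one of these), operators as matrices.\<close>

type_synonym 'n cvec = "complex ^ 'n"
type_synonym 'n cop = "complex ^ 'n ^ 'n"

definition cinner :: "'n::finite cvec \<Rightarrow> 'n cvec \<Rightarrow> complex" where
  "cinner x y = (\<Sum>i\<in>UNIV. cnj (x $ i) * y $ i)"

definition adj :: "'n::finite cop \<Rightarrow> 'n cop" where
  "adj M = (\<chi> i j. cnj (M $ j $ i))"

definition P_module :: "'n::finite cop \<Rightarrow> 'n cop \<Rightarrow> bool" where
  "P_module A B \<longleftrightarrow> adj A ** A + adj B ** B = mat 1"

definition csubspace :: "'n::finite cvec set \<Rightarrow> bool" where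
  "csubspace S \<longleftrightarrow> 0 \<in> S \<and> (\<forall>x\<in>S. \<forall>y\<in>S. x + y \<in> S) \<and> (\<forall>c. \<forall>x\<in>S. c *s x \<in> S)"

definition submodule :: "'n::finite cop \<Rightarrow> 'n cop \<Rightarrow> 'n cvec set \<Rightarrow> bool" where
  "submodule A B S \<longleftrightarrow> csubspace S \<and> (\<forall>x\<in>S. A *v x \<in> S \<and> B *v x \<in> S)"

definition irreducible_submodule :: "'n::finite cop \<Rightarrow> 'n cop \<Rightarrow> 'n cvec set \<Rightarrow> bool" where
  "irreducible_submodule A B S \<longleftrightarrow> submodule A B S \<and> S \<noteq> {0} \<and>
     (\<forall>T. submodule A B T \<and> T \<subseteq> S \<longrightarrow> T = {0} \<or> T = S)"

definition Hcomp :: "'n::finite cop \<Rightarrow> 'n cop \<Rightarrow> 'n cvec set" where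
  "Hcomp A B = \<Inter>{T. csubspace T \<and> \<Union>{S. irreducible_submodule A B S} \<subseteq> T}"

definition Hres :: "'n::finite cop \<Rightarrow> 'n cop \<Rightarrow> 'n cvec set" where
  "Hres A B = {x. \<forall>y\<in>Hcomp A B. cinner y x = 0}"

text \<open>Letters: False = 0 (operator A), True = 1 (operator B).
  A word x1...xn acts as X_{xn} ... X_{x1}.\<close>
definition word_act :: "'n::finite cop \<Rightarrow> 'n cop \<Rightarrow> bool list \<Rightarrow> 'n cvec \<Rightarrow> 'n cvec" where
  "word_act A B w \<xi> = fold (\<lambda>b v. (if b then B else A) *v v) w \<xi>"

text \<open>A ray is an infinite binary sequence p = x1 x2 ..., stored 0-indexed: p i = x_{i+1}.\<close>
definition prefix_ray :: "(nat \<Rightarrow> bool) \<Rightarrow> nat \<Rightarrow> bool list" where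
  "prefix_ray p n = map p [0..<n]"

definition contained_in :: "'n::finite cop \<Rightarrow> 'n cop \<Rightarrow> 'n cvec \<Rightarrow> (nat \<Rightarrow> bool) \<Rightarrow> bool" where
  "contained_in A B \<xi> p \<longleftrightarrow> \<xi> \<noteq> 0 \<and> (\<forall>n. norm (word_act A B (prefix_ray p n) \<xi>) = norm \<xi>)"

text \<open>The ray v w w w ... (w nonempty).\<close>
definition ray_of :: "bool list \<Rightarrow> bool list \<Rightarrow> nat \<Rightarrow> bool" where
  "ray_of v w i = (if i < length v then v ! i else w ! ((i - length v) mod length w))"

definition eventually_periodic :: "(nat \<Rightarrow> bool) \<Rightarrow> bool" where
  "eventually_periodic p \<longleftrightarrow> (\<exists>v w. w \<noteq> [] \<and> p = ray_of v w)"

definition periodic :: "(nat \<Rightarrow> bool) \<Rightarrow> bool" where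
  "periodic p \<longleftrightarrow> (\<exists>w. w \<noteq> [] \<and> p = ray_of [] w)"

end

theory Submission
  imports Defs
begin

text \<open>
  If x is contained in a ray q, the identity A*A + B*B = 1 forces the operator of the letter not
  taken at each step to annihilate the current image of x.  Hence the words along q preserve inner
  products with x, and vectors contained in different rays are orthogonal.

  Write p = v w w w ... and let S be an irreducible sub-module.  If S is orthogonal to every vector
  contained in r = w w w ..., then the inner product of y in S with \<xi> equals that of v y with
  v \<xi>, which is 0.  Otherwise a maximiser of the modulus of the inner product over the unit
  balls of S and of the vectors contained in r is, by the invariance under the period word, itself
  contained in r.  Its images under all words are contained in shifts of r, none of which is p
  since p is not periodic; so the vectors of S whose word images are all orthogonal to \<xi> form
  a non-zero sub-module, hence all of S.  Thus \<xi> is orthogonal to every irreducible sub-module.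
\<close>

section \<open>Sesquilinear inner product\<close>

lemma cinner_add_left: "cinner (x + y) z = cinner x z + cinner y z"
  by (simp add: cinner_def sum.distrib algebra_simps)

lemma cinner_add_right: "cinner z (x + y) = cinner z x + cinner z y"
  by (simp add: cinner_def sum.distrib algebra_simps)

lemma cinner_zero_left [simp]: "cinner 0 z = 0"
  by (simp add: cinner_def)

lemma cinner_zero_right [simp]: "cinner z 0 = 0"
  by (simp add: cinner_def)

lemma cinner_scale_left: "cinner (c *s x) z = cnj c * cinner x z"
  by (simp add: cinner_def sum_distrib_left algebra_simps)

lemma cinner_scale_right: "cinner z (c *s x) = c * cinner z x"
  by (simp add: cinner_def sum_distrib_left algebra_simps)

lemma scaleR_eq_scale_of_real: "r *\<^sub>R (x :: complex ^ 'n) = complex_of_real r *s x"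
  unfolding vec_eq_iff vector_scaleR_component vector_smult_component
  by (simp add: scaleR_conv_of_real)

lemma norm_cinner_scaleR:
  "norm (cinner (a *\<^sub>R x) (b *\<^sub>R y)) = \<bar>a\<bar> * \<bar>b\<bar> * norm (cinner x y)"
  by (simp add: scaleR_eq_scale_of_real cinner_scale_left cinner_scale_right norm_mult)

lemma cinner_adj: "cinner ((M :: 'n::finite cop) *v x) y = cinner x (adj M *v y)"
proof -
  have "cinner (M *v x) y = (\<Sum>i\<in>UNIV. \<Sum>j\<in>UNIV. cnj (M $ i $ j) * cnj (x $ j) * y $ i)"
    unfolding cinner_def matrix_vector_mult_def by (simp add: cnj_sum sum_distrib_right)
  also have "\<dots> = (\<Sum>j\<in>UNIV. \<Sum>i\<in>UNIV. cnj (M $ i $ j) * cnj (x $ j) * y $ i)"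
    by (rule sum.swap)
  also have "\<dots> = cinner x (adj M *v y)"
    unfolding cinner_def adj_def matrix_vector_mult_def by (simp add: sum_distrib_left mult_ac)
  finally show ?thesis .
qed

lemma cinner_self: "cinner x x = complex_of_real (norm x ^ 2)"
proof -
  have "cinner x x = (\<Sum>i\<in>UNIV. complex_of_real (norm (x $ i) ^ 2))"
    unfolding cinner_def
    by (intro sum.cong refl) (metis complex_norm_square mult.commute of_real_power)
  also have "\<dots> = complex_of_real (norm x ^ 2)"
    by (simp add: norm_vec_def L2_set_def sum_nonneg)
  finally show ?thesis .
qed

lemma continuous_on_norm_cinner: "continuous_on X (\<lambda>z. norm (cinner (fst z) (snd z)))"
  unfolding cinner_def by (intro continuous_intros)

lemma cinner_attains_max_on_unit_balls:
  assumes "closed S" "closed T" "y \<in> S" "x \<in> T" "norm y \<le> 1" "norm x \<le> 1"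
  obtains y0 x0 where "y0 \<in> S" "norm y0 \<le> 1" "x0 \<in> T" "norm x0 \<le> 1"
    and "\<And>y' x'. y' \<in> S \<Longrightarrow> x' \<in> T \<Longrightarrow> norm y' \<le> 1 \<Longrightarrow> norm x' \<le> 1 \<Longrightarrow>
      norm (cinner y' x') \<le> norm (cinner y0 x0)"
proof -
  let ?K = "(S \<inter> cball 0 1) \<times> (T \<inter> cball 0 1)"
  have "compact ?K"
    using assms(1,2) by (intro compact_Times closed_Int_compact compact_cball)
  moreover have "?K \<noteq> {}"
    using assms(3-6) by auto
  ultimately obtain z0 where "z0 \<in> ?K"
    and "\<forall>z\<in>?K. norm (cinner (fst z) (snd z)) \<le> norm (cinner (fst z0) (snd z0))"
    using continuous_attains_sup[OF _ _ continuous_on_norm_cinner] by blast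
  then show ?thesis
    using that[of "fst z0" "snd z0"] by force
qed

lemma csubspace_cinner_orthogonal: "csubspace {y. cinner y x = 0}"
  by (simp add: csubspace_def cinner_add_left cinner_scale_left)

lemma csubspace_scaleR: "csubspace S \<Longrightarrow> x \<in> S \<Longrightarrow> c *\<^sub>R x \<in> S"
  by (simp add: csubspace_def scaleR_eq_scale_of_real)

lemma closed_csubspace: "csubspace S \<Longrightarrow> closed S"
  by (intro closed_subspace) (simp add: csubspace_def subspace_def scaleR_eq_scale_of_real)

section \<open>Words and rays\<close>

definition letter :: "'n::finite cop \<Rightarrow> 'n cop \<Rightarrow> bool \<Rightarrow> 'n cop" where
  "letter A B b = (if b then B else A)"

lemma word_act_Nil [simp]: "word_act A B [] x = x"
  by (simp add: word_act_def)

lemma word_act_Cons [simp]: "word_act A B (b # u) x = word_act A B u (letter A B b *v x)"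
  by (simp add: word_act_def letter_def)

lemma word_act_append: "word_act A B (u @ u') x = word_act A B u' (word_act A B u x)"
  by (simp add: word_act_def)

lemma word_act_snoc: "word_act A B (u @ [b]) x = letter A B b *v word_act A B u x"
  by (simp add: word_act_append)

lemma word_act_matrix: "\<exists>M. word_act A B u = (\<lambda>x. M *v x)"
proof (induction u)
  case Nil
  show ?case by (intro exI[of _ "mat 1"]) auto
next
  case (Cons b u)
  then obtain M where "word_act A B u = (\<lambda>x. M *v x)" by blast
  then show ?case
    by (intro exI[of _ "M ** letter A B b"]) (auto simp: matrix_vector_mul_assoc)
qed

lemma word_act_add: "word_act A B u (x + y) = word_act A B u x + word_act A B u y"
  using word_act_matrix[of A B u] by (auto simp: matrix_vector_right_distrib)

lemma word_act_scale: "word_act A B u (c *s x) = c *s word_act A B u x"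
  using word_act_matrix[of A B u] by (auto simp: vector_scalar_commute)

lemma word_act_scaleR: "word_act A B u (c *\<^sub>R x) = c *\<^sub>R word_act A B u x"
  by (simp add: scaleR_eq_scale_of_real word_act_scale)

lemma word_act_zero [simp]: "word_act A B u 0 = 0"
  using word_act_matrix[of A B u] by auto

lemma continuous_on_word_act: "continuous_on X (word_act A B u)"
proof -
  obtain M where "word_act A B u = (\<lambda>x. M *v x)"
    using word_act_matrix by blast
  moreover have "bounded_linear (\<lambda>x. M *v x)"
    using linear_conv_bounded_linear matrix_vector_mul_linear by blast
  ultimately show ?thesis
    using linear_continuous_on by metis
qed

lemma submodule_word_act: "submodule A B S \<Longrightarrow> y \<in> S \<Longrightarrow> word_act A B u y \<in> S"
  by (induction u arbitrary: y) (auto simp: submodule_def letter_def)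

definition ray_drop :: "nat \<Rightarrow> (nat \<Rightarrow> bool) \<Rightarrow> nat \<Rightarrow> bool" where
  "ray_drop n q = (\<lambda>i. q (n + i))"

lemma ray_drop_apply: "ray_drop n q i = q (n + i)"
  by (simp add: ray_drop_def)

lemma ray_drop_ray_drop [simp]: "ray_drop m (ray_drop n q) = ray_drop (n + m) q"
  by (simp add: ray_drop_def add.assoc)

lemma ray_drop_mult_period:
  assumes "ray_drop L r = r"
  shows "ray_drop (k * L) r = r"
proof (induction k)
  case 0
  show ?case by (simp add: ray_drop_def)
next
  case (Suc k)
  then show ?case
    using assms by (metis add.commute mult_Suc ray_drop_ray_drop)
qed

lemma prefix_ray_Suc: "prefix_ray q (Suc n) = prefix_ray q n @ [q n]"
  by (simp add: prefix_ray_def)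

lemma prefix_ray_add: "prefix_ray q (m + n) = prefix_ray q m @ prefix_ray (ray_drop m q) n"
  by (induction n) (simp_all add: prefix_ray_def ray_drop_apply)

lemma prefix_ray_eqI: "(\<And>i. i < n \<Longrightarrow> q i = q' i) \<Longrightarrow> prefix_ray q n = prefix_ray q' n"
  by (simp add: prefix_ray_def)

lemma prefix_ray_of: "prefix_ray (ray_of v w) (length v) = v"
  by (rule nth_equalityI) (simp_all add: prefix_ray_def ray_of_def)

lemma ray_drop_ray_of: "ray_drop (length v) (ray_of v w) = ray_of [] w"
  by (rule ext) (simp add: ray_of_def ray_drop_apply)

lemma ray_drop_periodic: "ray_drop (length w) (ray_of [] w) = ray_of [] w"
  by (rule ext) (simp add: ray_of_def ray_drop_apply)

lemma ray_drop_rotate: "w \<noteq> [] \<Longrightarrow> ray_drop k (ray_of [] w) = ray_of [] (rotate k w)"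
  by (rule ext) (simp add: ray_of_def nth_rotate mod_add_right_eq ray_drop_apply)

definition ray_space :: "'n::finite cop \<Rightarrow> 'n cop \<Rightarrow> (nat \<Rightarrow> bool) \<Rightarrow> 'n cvec set" where
  "ray_space A B q = {x. \<forall>n. norm (word_act A B (prefix_ray q n) x) = norm x}"

lemma contained_in_iff_ray_space: "contained_in A B x q \<longleftrightarrow> x \<noteq> 0 \<and> x \<in> ray_space A B q"
  by (simp add: contained_in_def ray_space_def)

lemma closed_ray_space: "closed (ray_space A B q)"
proof -
  have "ray_space A B q = (\<Inter>n. {x. norm (word_act A B (prefix_ray q n) x) = norm x})"
    by (auto simp: ray_space_def)
  moreover have "closed {x. norm (word_act A B (prefix_ray q n) x) = norm x}" for n
    by (intro closed_Collect_eq continuous_on_norm continuous_on_word_act continuous_on_id)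
  ultimately show ?thesis by auto
qed

lemma ray_space_scaleR: "x \<in> ray_space A B q \<Longrightarrow> c *\<^sub>R x \<in> ray_space A B q"
  by (simp add: ray_space_def word_act_scaleR)

lemma ray_space_ray_drop:
  assumes "x \<in> ray_space A B q"
  shows "word_act A B (prefix_ray q n) x \<in> ray_space A B (ray_drop n q)"
  using assms by (simp add: ray_space_def prefix_ray_add[symmetric] word_act_append[symmetric])

section \<open>Rays in a P-module\<close>

locale pmodule =
  fixes A B :: "'n::finite cop"
  assumes pmodule: "P_module A B"
begin

lemma cinner_split: "cinner x y = cinner (A *v x) (A *v y) + cinner (B *v x) (B *v y)"
proof -
  have "cinner (A *v x) (A *v y) + cinner (B *v x) (B *v y)
      = cinner x ((adj A ** A + adj B ** B) *v y)"
    by (simp add: cinner_adj matrix_vector_mul_assoc matrix_vector_mult_add_rdistrib cinner_add_right)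
  then show ?thesis
    using pmodule by (simp add: P_module_def)
qed

lemma cinner_split_letter:
  "cinner x y = cinner (letter A B b *v x) (letter A B b *v y)
              + cinner (letter A B (\<not> b) *v x) (letter A B (\<not> b) *v y)"
  using cinner_split[of x y] by (cases b) (simp_all add: letter_def add.commute)

lemma norm_split_letter:
  "norm x ^ 2 = norm (letter A B b *v x) ^ 2 + norm (letter A B (\<not> b) *v x) ^ 2"
proof -
  have "complex_of_real (norm x ^ 2)
      = complex_of_real (norm (letter A B b *v x) ^ 2 + norm (letter A B (\<not> b) *v x) ^ 2)"
    using cinner_split_letter[of x x b] by (simp add: cinner_self)
  then show ?thesis
    by (simp only: of_real_eq_iff)
qed

lemma norm_letter_le: "norm (letter A B b *v x) \<le> norm x"
proof -
  have "norm (letter A B b *v x) ^ 2 \<le> norm x ^ 2"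
    using norm_split_letter[of x b] by simp
  then show ?thesis
    by (rule power2_le_imp_le) simp
qed

lemma letter_kills_if_isometric:
  "norm (letter A B b *v x) = norm x \<Longrightarrow> letter A B (\<not> b) *v x = 0"
  using norm_split_letter[of x b] by simp

lemma cinner_letter_if_kills:
  "letter A B (\<not> b) *v y = 0 \<Longrightarrow> cinner x y = cinner (letter A B b *v x) (letter A B b *v y)"
  using cinner_split_letter[of x y b] by simp

lemma cinner_eq_0_if_kills:
  "letter A B (\<not> b) *v x = 0 \<Longrightarrow> letter A B b *v z = 0 \<Longrightarrow> cinner x z = 0"
  using cinner_split_letter[of x z b] by simp

lemma norm_word_act_le: "norm (word_act A B u x) \<le> norm x"
proof (induction u arbitrary: x)
  case (Cons b u)
  show ?case
    using Cons.IH[of "letter A B b *v x"] norm_letter_le[of b x] by simp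
qed simp

lemma ray_space_kills:
  assumes "x \<in> ray_space A B q"
  shows "letter A B (\<not> q n) *v word_act A B (prefix_ray q n) x = 0"
proof (rule letter_kills_if_isometric)
  let ?y = "word_act A B (prefix_ray q n) x"
  have "?y \<in> ray_space A B (ray_drop n q)"
    using assms by (rule ray_space_ray_drop)
  then have "norm (word_act A B (prefix_ray (ray_drop n q) 1) ?y) = norm ?y"
    unfolding ray_space_def mem_Collect_eq by (rule spec)
  moreover have "prefix_ray (ray_drop n q) 1 = [q n]"
    by (simp add: prefix_ray_def ray_drop_apply)
  ultimately show "norm (letter A B (q n) *v ?y) = norm ?y"
    by simp
qed

lemma cinner_word_act_prefix_ray:
  assumes "x \<in> ray_space A B q"
  shows "cinner y x = cinner (word_act A B (prefix_ray q n) y) (word_act A B (prefix_ray q n) x)"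
proof (induction n)
  case 0
  show ?case by (simp add: prefix_ray_def)
next
  case (Suc n)
  let ?y = "word_act A B (prefix_ray q n) y" and ?x = "word_act A B (prefix_ray q n) x"
  have "cinner y x = cinner ?y ?x"
    by (fact Suc.IH)
  also have "\<dots> = cinner (letter A B (q n) *v ?y) (letter A B (q n) *v ?x)"
    using ray_space_kills[OF assms] by (rule cinner_letter_if_kills)
  finally show ?case
    by (simp only: prefix_ray_Suc word_act_snoc)
qed

lemma ray_space_orthogonal:
  assumes "q \<noteq> q'" "x \<in> ray_space A B q" "z \<in> ray_space A B q'"
  shows "cinner x z = 0"
proof -
  have "\<exists>n. q n \<noteq> q' n"
    using assms(1) by (simp add: fun_eq_iff)
  then have "\<exists>n. q n \<noteq> q' n \<and> (\<forall>i<n. \<not> q i \<noteq> q' i)"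
    by (rule iffD1[OF exists_least_iff])
  then obtain n where n: "q n \<noteq> q' n" and agree: "\<And>i. i < n \<Longrightarrow> q i = q' i"
    by blast
  have prefix: "prefix_ray q' n = prefix_ray q n"
    by (rule prefix_ray_eqI) (simp add: agree)
  have "cinner x z = cinner (word_act A B (prefix_ray q' n) x) (word_act A B (prefix_ray q' n) z)"
    using assms(3) by (rule cinner_word_act_prefix_ray)
  also have "\<dots> = cinner (word_act A B (prefix_ray q n) x) (word_act A B (prefix_ray q n) z)"
    by (simp only: prefix)
  also have "\<dots> = 0"
  proof (rule cinner_eq_0_if_kills)
    show "letter A B (\<not> q n) *v word_act A B (prefix_ray q n) x = 0"
      using assms(2) by (rule ray_space_kills)
    have "q' n = (\<not> q n)"
      using n by blast
    then show "letter A B (q n) *v word_act A B (prefix_ray q n) z = 0"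
      using ray_space_kills[OF assms(3), of n] prefix by simp
  qed
  finally show ?thesis .
qed

lemma word_act_ray_space:
  assumes "x \<in> ray_space A B q"
  shows "word_act A B u x = 0 \<or> word_act A B u x \<in> ray_space A B (ray_drop (length u) q)"
proof (induction u rule: rev_induct)
  case Nil
  show ?case using assms by (simp add: ray_space_def ray_drop_def)
next
  case (snoc b u)
  show ?case
  proof (cases "word_act A B u x = 0")
    case False
    then have y: "word_act A B u x \<in> ray_space A B (ray_drop (length u) q)"
      using snoc by blast
    show ?thesis
    proof (cases "b = q (length u)")
      case True
      have "ray_drop (length (u @ [b])) q = ray_drop 1 (ray_drop (length u) q)"
        by simp
      moreover have "word_act A B (u @ [b]) x
          = word_act A B (prefix_ray (ray_drop (length u) q) 1) (word_act A B u x)"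
        using True by (simp add: prefix_ray_def ray_drop_apply word_act_snoc)
      ultimately have "word_act A B (u @ [b]) x \<in> ray_space A B (ray_drop (length (u @ [b])) q)"
        using ray_space_ray_drop[OF y, of 1] by (simp only:)
      then show ?thesis ..
    next
      case False
      then have "b = (\<not> q (length u))"
        by blast
      then have "word_act A B (u @ [b]) x = 0"
        using ray_space_kills[OF y, of 0] by (simp add: prefix_ray_def ray_drop_apply word_act_snoc)
      then show ?thesis ..
    qed
  qed (simp add: word_act_snoc)
qed

lemma ray_space_if_norm_kept_at_multiples:
  assumes "0 < L" and kept: "\<And>k. norm y \<le> norm (word_act A B (prefix_ray r (k * L)) y)"
  shows "y \<in> ray_space A B r"
  unfolding ray_space_def
proof (intro CollectI allI antisym)
  fix n
  have "n \<le> n * L"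
    using assms(1) by simp
  then obtain d where d: "n * L = n + d"
    using le_Suc_ex by blast
  have "norm y \<le> norm (word_act A B (prefix_ray r (n * L)) y)"
    by (fact kept)
  also have "\<dots> = norm (word_act A B (prefix_ray (ray_drop n r) d) (word_act A B (prefix_ray r n) y))"
    by (simp add: d prefix_ray_add word_act_append)
  also have "\<dots> \<le> norm (word_act A B (prefix_ray r n) y)"
    by (rule norm_word_act_le)
  finally show "norm y \<le> norm (word_act A B (prefix_ray r n) y)" .
qed (rule norm_word_act_le)

lemma nonorthogonal_submodule_meets_ray_space:
  assumes S: "submodule A B S" and period: "ray_drop L r = r" "0 < L"
    and y: "y \<in> S" and x: "x \<in> ray_space A B r" and not_orthogonal: "cinner y x \<noteq> 0"
  obtains y0 where "y0 \<in> S" "y0 \<noteq> 0" "y0 \<in> ray_space A B r"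
proof -
  have cS: "csubspace S"
    using S by (simp add: submodule_def)
  let ?y1 = "(1 / norm y) *\<^sub>R y" and ?x1 = "(1 / norm x) *\<^sub>R x"
  have unit: "?y1 \<in> S" "?x1 \<in> ray_space A B r" "norm ?y1 \<le> 1" "norm ?x1 \<le> 1"
    using y x cS by (simp_all add: csubspace_scaleR ray_space_scaleR)
  obtain y0 x0 where y0: "y0 \<in> S" "norm y0 \<le> 1" and x0: "x0 \<in> ray_space A B r" "norm x0 \<le> 1"
    and bound: "\<And>y' x'. y' \<in> S \<Longrightarrow> x' \<in> ray_space A B r \<Longrightarrow> norm y' \<le> 1 \<Longrightarrow> norm x' \<le> 1 \<Longrightarrow>
      norm (cinner y' x') \<le> norm (cinner y0 x0)"
    using cinner_attains_max_on_unit_balls[OF closed_csubspace[OF cS] closed_ray_space unit] by blast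
  define \<mu> where "\<mu> = norm (cinner y0 x0)"
  have "0 < norm (cinner ?y1 ?x1)"
    using not_orthogonal by (cases "y = 0 \<or> x = 0") (auto simp: norm_cinner_scaleR)
  also have "\<dots> \<le> \<mu>"
    unfolding \<mu>_def using unit by (rule bound)
  finally have "0 < \<mu>" .
  \<comment> \<open>The period words fix cinner y0 x0 and keep x0 in the ball, so by maximality
    they cannot shrink y0.\<close>
  have orbit_large: "1 \<le> norm (word_act A B (prefix_ray r (k * L)) y0)" for k
  proof -
    let ?yk = "word_act A B (prefix_ray r (k * L)) y0"
    let ?xk = "word_act A B (prefix_ray r (k * L)) x0"
    have xk: "?xk \<in> ray_space A B r"
      using ray_space_ray_drop[OF x0(1), of "k * L"] ray_drop_mult_period[OF period(1)] by simp
    have "norm (cinner ?yk ?xk) = \<mu>"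
      using cinner_word_act_prefix_ray[OF x0(1)] by (simp add: \<mu>_def)
    then have "?yk \<noteq> 0"
      using \<open>0 < \<mu>\<close> by auto
    have "\<mu> / norm ?yk = norm (cinner ((1 / norm ?yk) *\<^sub>R ?yk) ?xk)"
      using norm_cinner_scaleR[of "1 / norm ?yk" ?yk 1 ?xk] \<open>norm (cinner ?yk ?xk) = \<mu>\<close> by simp
    also have "\<dots> \<le> \<mu>"
      unfolding \<mu>_def
    proof (rule bound)
      show "(1 / norm ?yk) *\<^sub>R ?yk \<in> S"
        using cS submodule_word_act[OF S y0(1)] by (rule csubspace_scaleR)
      show "norm ?xk \<le> 1"
        using norm_word_act_le[of _ x0] x0(2) by (rule order_trans)
    qed (use xk \<open>?yk \<noteq> 0\<close> in simp_all)
    finally show ?thesis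
      using \<open>0 < \<mu>\<close> \<open>?yk \<noteq> 0\<close> by (simp add: divide_le_eq)
  qed
  have "y0 \<in> ray_space A B r"
    using period(2)
  proof (rule ray_space_if_norm_kept_at_multiples)
    show "norm y0 \<le> norm (word_act A B (prefix_ray r (k * L)) y0)" for k
      using y0(2) orbit_large[of k] by (rule order_trans)
  qed
  moreover have "y0 \<noteq> 0"
    using orbit_large[of 0] by (auto simp: prefix_ray_def)
  ultimately show ?thesis
    using y0(1) that by blast
qed

lemma irreducible_submodule_orthogonal_ray_space:
  assumes irr: "irreducible_submodule A B S"
    and y0: "y0 \<in> S" "y0 \<noteq> 0" "y0 \<in> ray_space A B r"
    and x: "x \<in> ray_space A B q" and not_shift: "\<And>k. ray_drop k r \<noteq> q"
    and y: "y \<in> S"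
  shows "cinner y x = 0"
proof -
  have S: "submodule A B S"
    using irr by (simp add: irreducible_submodule_def)
  define N where "N = {y \<in> S. \<forall>u. cinner (word_act A B u y) x = 0}"
  have letter_N: "letter A B b *v y \<in> N" if "y \<in> N" for b y
  proof -
    have "cinner (word_act A B (b # u) y) x = 0" for u
      using that by (simp add: N_def del: word_act_Cons)
    then show ?thesis
      using that S by (simp add: N_def submodule_def letter_def)
  qed
  have "submodule A B N"
    unfolding submodule_def csubspace_def
  proof (intro conjI ballI allI)
    show "0 \<in> N"
      using S by (simp add: N_def submodule_def csubspace_def)
    show "x + y \<in> N" if "x \<in> N" "y \<in> N" for x y
      using that S by (simp add: N_def submodule_def csubspace_def word_act_add cinner_add_left)
    show "c *s y \<in> N" if "y \<in> N" for c y
      using that S by (simp add: N_def submodule_def csubspace_def word_act_scale cinner_scale_left)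
    show "A *v y \<in> N" "B *v y \<in> N" if "y \<in> N" for y
      using letter_N[OF that, of False] letter_N[OF that, of True] by (simp_all add: letter_def)
  qed
  moreover have "y0 \<in> N"
  proof -
    have "cinner (word_act A B u y0) x = 0" for u
      using word_act_ray_space[OF y0(3), of u] ray_space_orthogonal[OF not_shift _ x] by auto
    then show ?thesis
      using y0(1) by (simp add: N_def)
  qed
  ultimately have "N = S"
    using irr y0(2) by (auto simp: irreducible_submodule_def N_def)
  then have "cinner (word_act A B [] y) x = 0"
    using y unfolding N_def by blast
  then show ?thesis
    by simp
qed

lemma irreducible_submodule_orthogonal_eventually_periodic:
  assumes irr: "irreducible_submodule A B S" and y: "y \<in> S"
    and \<xi>: "\<xi> \<in> ray_space A B (ray_of v w)"
    and w: "w \<noteq> []" and not_periodic: "\<not> periodic (ray_of v w)"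
  shows "cinner y \<xi> = 0"
proof -
  let ?r = "ray_of [] w"
  have S: "submodule A B S"
    using irr by (simp add: irreducible_submodule_def)
  have \<eta>: "word_act A B v \<xi> \<in> ray_space A B ?r"
    using ray_space_ray_drop[OF \<xi>, of "length v"] by (simp add: prefix_ray_of ray_drop_ray_of)
  show ?thesis
  proof (cases "\<exists>y'\<in>S. \<exists>x\<in>ray_space A B ?r. cinner y' x \<noteq> 0")
    case True
    then obtain y0 where "y0 \<in> S" "y0 \<noteq> 0" "y0 \<in> ray_space A B ?r"
      using nonorthogonal_submodule_meets_ray_space[OF S ray_drop_periodic] w by blast
    moreover have "ray_drop k ?r \<noteq> ray_of v w" for k
    proof -
      have "rotate k w \<noteq> []"
        using w by simp
      then show ?thesis
        using not_periodic ray_drop_rotate[OF w, of k] unfolding periodic_def by metis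
    qed
    ultimately show ?thesis
      using irreducible_submodule_orthogonal_ray_space[OF irr _ _ _ \<xi> _ y] by blast
  next
    case False
    have "cinner y \<xi> = cinner (word_act A B v y) (word_act A B v \<xi>)"
      using cinner_word_act_prefix_ray[OF \<xi>, of y "length v"] by (simp add: prefix_ray_of)
    also have "\<dots> = 0"
      using False submodule_word_act[OF S y] \<eta> by blast
    finally show ?thesis .
  qed
qed

end

lemma Hres_if_orthogonal_to_irreducibles:
  assumes "\<And>S y. irreducible_submodule A B S \<Longrightarrow> y \<in> S \<Longrightarrow> cinner y x = 0"
  shows "x \<in> Hres A B"
proof -
  have "Hcomp A B \<subseteq> {y. cinner y x = 0}"
    unfolding Hcomp_def using csubspace_cinner_orthogonal assms by blast
  then show ?thesis
    unfolding Hres_def by blast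
qed

theorem lemma2p11:
  fixes A B :: "'n::finite cop" and \<xi> :: "'n cvec" and p :: "nat \<Rightarrow> bool"
  assumes "P_module A B"
    and "eventually_periodic p"
    and "\<not> periodic p"
    and "contained_in A B \<xi> p"
  shows "\<xi> \<in> Hres A B"
proof (rule Hres_if_orthogonal_to_irreducibles)
  interpret pmodule A B
    using assms(1) by (rule pmodule.intro)
  obtain v w where "w \<noteq> []" and p: "p = ray_of v w"
    using assms(2) by (auto simp: eventually_periodic_def)
  moreover have "\<xi> \<in> ray_space A B p"
    using assms(4) by (simp add: contained_in_iff_ray_space)
  ultimately show "cinner y \<xi> = 0" if "irreducible_submodule A B S" "y \<in> S" for S y
    using irreducible_submodule_orthogonal_eventually_periodic[OF that] assms(3) by blast
qed

end
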